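(* Let $(X,A,\varphi_X)$ be an inverse limit pro-$C^{\ast}$-correspondence, where the topology of $A$ is given by $\{p_\lambda\}_{\lambda\in\Lambda}$. Then $\pi^A_\lambda(J^\lambda_X)=J_{X_\lambda}$ for all $\lambda\in\Lambda$.
   Context: A pro-$C^{\ast}$-algebra is a complete Hausdorff topological $\ast$-algebra $A$ whose topology is defined by an upward directed family $\{p_\lambda\}_{\lambda\in\Lambda}$ of $C^{\ast}$-seminorms; $A_\lambda=A/\ker p_\lambda$ is a $C^{\ast}$-algebra, $\pi^A_\lambda:A\to A_\lambda$ the quotient map. A right Hilbert $A$-module $X$ is a right $A$-module with an $A$-valued inner product $\langle\cdot,\cdot\rangle_A$ (linear and $A$-linear in the second variable, conjugate linear in the first, positive definite, $\langle x,y\rangle_A^\ast=\langle y,x\rangle_A$), complete for $p^A_\lambda(x)=p_\lambda(\langle x,x\rangle_A)^{1/2}$; $X_\lambda=X/\ker p^A_\lambda$ is a Hilbert $C^{\ast}$-module over $A_\lambda$ with quotient map $\sigma^X_\lambda$. $L_A(X)$ is the pro-$C^{\ast}$-algebra of adjointable module maps on $X$, and $\pi^{L_A(X)}_\lambda:L_A(X)\to L_{A_\lambda}(X_\lambda)$ is given by $\pi^{L_A(X)}_\lambda(T)(\sigma^X_\lambda(x))=\sigma^X_\lambda(Tx)$. For a Hilbert $C^{\ast}$-module $Y$ over $B$, $K_B(Y)$ is the closed span of the operators $\theta_{x,y}(z)=x\langle y,z\rangle$. A pro-$C^{\ast}$-correspondence is a triple $(X,A,\varphi_X)$ with $\varphi_X:A\to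 L_A(X)$ a continuous $\ast$-homomorphism; it is an inverse limit pro-$C^{\ast}$-correspondence if for every $\lambda$ there is a $\ast$-homomorphism $\varphi_{X_\lambda}:A_\lambda\to L_{A_\lambda}(X_\lambda)$ with $\varphi_{X_\lambda}(\pi^A_\lambda(a))(\sigma^X_\lambda(x))=\sigma^X_\lambda(\varphi_X(a)x)$ for all $a\in A,x\in X$ (so $(X_\lambda,A_\lambda,\varphi_{X_\lambda})$ is a $C^{\ast}$-correspondence). For $\lambda\in\Lambda$, $J^\lambda_X=\{a\in A: \pi^{L_A(X)}_\lambda(\varphi_X(a))\in K_{A_\lambda}(X_\lambda)\text{ and }\pi^A_\lambda(ab)=0 \text{ for all } b\in\ker(\pi^{L_A(X)}_\lambda\circ\varphi_X)\}$. For a $C^{\ast}$-correspondence $(Y,B,\varphi_Y)$, $J_Y=\varphi_Y^{-1}(K_B(Y))\cap(\ker\varphi_Y)^\perp$, where $(\ker\varphi_Y)^\perp=\{b\in B: bc=0\ \forall c\in\ker\varphi_Y\}$. *)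

theory Defs
  imports Complex_Main
begin

section \<open>Pro-C*-algebras (carrier = the whole type 'a)\<close>

record ('l, 'a) pro_alg =
  idx :: "'l set"
  sn  :: "'l \<Rightarrow> 'a \<Rightarrow> real"
  asc :: "complex \<Rightarrow> 'a \<Rightarrow> 'a"
  ast :: "'a \<Rightarrow> 'a"

definition complex_vs :: "(complex \<Rightarrow> 'v::ab_group_add \<Rightarrow> 'v) \<Rightarrow> bool" where
  "complex_vs sc \<longleftrightarrow>
     (\<forall>c u v. sc c (u + v) = sc c u + sc c v) \<and>
     (\<forall>c d u. sc (c + d) u = sc c u + sc d u) \<and>
     (\<forall>c d u. sc (c * d) u = sc c (sc d u)) \<and>
     (\<forall>u. sc 1 u = u)"

definition star_algebra :: "('l, 'a::ring) pro_alg \<Rightarrow> bool" where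
  "star_algebra A \<longleftrightarrow> complex_vs (asc A) \<and>
     (\<forall>c a b. asc A c (a * b) = asc A c a * b \<and> asc A c (a * b) = a * asc A c b) \<and>
     (\<forall>a b. ast A (a + b) = ast A a + ast A b) \<and>
     (\<forall>c a. ast A (asc A c a) = asc A (cnj c) (ast A a)) \<and>
     (\<forall>a b. ast A (a * b) = ast A b * ast A a) \<and>
     (\<forall>a. ast A (ast A a) = a)"

definition cstar_seminorm :: "('l, 'a::ring) pro_alg \<Rightarrow> ('a \<Rightarrow> real) \<Rightarrow> bool" where
  "cstar_seminorm A q \<longleftrightarrow>
     (\<forall>a b. q (a + b) \<le> q a + q b) \<and>
     (\<forall>c a. q (asc A c a) = cmod c * q a) \<and>
     (\<forall>a b. q (a * b) \<le> q a * q b) \<and>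
     (\<forall>a. q (ast A a * a) = (q a)\<^sup>2)"

text \<open>Completeness of a space whose topology is given by a family of seminorms:
  every (proper) Cauchy filter (= Cauchy net) converges.\<close>
definition seminorm_complete :: "'l set \<Rightarrow> ('l \<Rightarrow> 'v::ab_group_add \<Rightarrow> real) \<Rightarrow> bool" where
  "seminorm_complete L q \<longleftrightarrow>
     (\<forall>F. F \<noteq> bot \<and>
          (\<forall>l\<in>L. \<forall>e>0. \<exists>S. eventually (\<lambda>x. x \<in> S) F \<and> (\<forall>x\<in>S. \<forall>y\<in>S. q l (x - y) < e))
      \<longrightarrow> (\<exists>v. \<forall>l\<in>L. \<forall>e>0. eventually (\<lambda>x. q l (x - v) < e) F))"

definition pro_cstar_algebra :: "('l, 'a::ring) pro_alg \<Rightarrow> bool" where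
  "pro_cstar_algebra A \<longleftrightarrow> star_algebra A \<and> idx A \<noteq> {} \<and>
     (\<forall>l\<in>idx A. cstar_seminorm A (sn A l)) \<and>
     (\<forall>l\<in>idx A. \<forall>m\<in>idx A. \<exists>n\<in>idx A. \<forall>a. sn A l a \<le> sn A n a \<and> sn A m a \<le> sn A n a) \<and>
     (\<forall>a. (\<forall>l\<in>idx A. sn A l a = 0) \<longrightarrow> a = 0) \<and>
     seminorm_complete (idx A) (sn A)"

definition positive :: "('l, 'a::ring) pro_alg \<Rightarrow> 'a \<Rightarrow> bool" where
  "positive A a \<longleftrightarrow> (\<exists>b. a = ast A b * b)"

section \<open>Hilbert modules over pro-C*-algebras (carrier = the whole type 'x)\<close>

record ('a, 'x) hmod =
  xsc :: "complex \<Rightarrow> 'x \<Rightarrow> 'x"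
  act :: "'x \<Rightarrow> 'a \<Rightarrow> 'x"
  ip  :: "'x \<Rightarrow> 'x \<Rightarrow> 'a"

definition xsn :: "('l, 'a::ring) pro_alg \<Rightarrow> ('a, 'x) hmod \<Rightarrow> 'l \<Rightarrow> 'x \<Rightarrow> real" where
  "xsn A M l x = sqrt (sn A l (ip M x x))"

definition hilbert_module :: "('l, 'a::ring) pro_alg \<Rightarrow> ('a, 'x::ab_group_add) hmod \<Rightarrow> bool" where
  "hilbert_module A M \<longleftrightarrow> pro_cstar_algebra A \<and> complex_vs (xsc M) \<and>
     (\<forall>x y a. act M (x + y) a = act M x a + act M y a) \<and>
     (\<forall>x a b. act M x (a + b) = act M x a + act M x b) \<and>
     (\<forall>x a b. act M x (a * b) = act M (act M x a) b) \<and>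
     (\<forall>c x a. xsc M c (act M x a) = act M (xsc M c x) a \<and> xsc M c (act M x a) = act M x (asc A c a)) \<and>
     (\<forall>x y z. ip M x (y + z) = ip M x y + ip M x z) \<and>
     (\<forall>c x y. ip M x (xsc M c y) = asc A c (ip M x y)) \<and>
     (\<forall>x y a. ip M x (act M y a) = ip M x y * a) \<and>
     (\<forall>x y. ip M y x = ast A (ip M x y)) \<and>
     (\<forall>x. positive A (ip M x x)) \<and>
     (\<forall>x. ip M x x = 0 \<longrightarrow> x = 0) \<and>
     seminorm_complete (idx A) (xsn A M)"

definition opsn :: "('l, 'a::ring) pro_alg \<Rightarrow> ('a, 'x) hmod \<Rightarrow> 'l \<Rightarrow> ('x \<Rightarrow> 'x) \<Rightarrow> real" where
  "opsn A M l T = Sup {xsn A M l (T x) | x. xsn A M l x \<le> 1}"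

definition adjointable :: "('a, 'x) hmod \<Rightarrow> ('x \<Rightarrow> 'x) \<Rightarrow> bool" where
  "adjointable M T \<longleftrightarrow> (\<exists>S. \<forall>x y. ip M (T x) y = ip M x (S y))"

definition pro_cstar_corr :: "('l, 'a::ring) pro_alg \<Rightarrow> ('a, 'x::ab_group_add) hmod \<Rightarrow> ('a \<Rightarrow> 'x \<Rightarrow> 'x) \<Rightarrow> bool" where
  "pro_cstar_corr A M phi \<longleftrightarrow> hilbert_module A M \<and>
     (\<forall>a. adjointable M (phi a)) \<and>
     (\<forall>a b x. phi (a + b) x = phi a x + phi b x) \<and>
     (\<forall>c a x. phi (asc A c a) x = xsc M c (phi a x)) \<and>
     (\<forall>a b x. phi (a * b) x = phi a (phi b x)) \<and>
     (\<forall>a x y. ip M (phi a x) y = ip M x (phi (ast A a) y)) \<and>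
     (\<forall>l\<in>idx A. \<exists>m\<in>idx A. \<exists>C. \<forall>a. opsn A M l (phi a) \<le> C * sn A m a)"

section \<open>Quotients A_lambda = A / ker p_lambda and X_lambda = X / ker p^A_lambda\<close>

text \<open>Elements of A_lambda (resp. X_lambda) are the cosets, i.e. sets of representatives.\<close>
definition qA :: "('l, 'a::ring) pro_alg \<Rightarrow> 'l \<Rightarrow> 'a \<Rightarrow> 'a set" where
  "qA A l a = {b. sn A l (b - a) = 0}"

definition repA :: "('l, 'a::ring) pro_alg \<Rightarrow> 'l \<Rightarrow> 'a set \<Rightarrow> 'a" where
  "repA A l c = (SOME a. c = qA A l a)"

definition qX :: "('l, 'a::ring) pro_alg \<Rightarrow> ('a, 'x::ab_group_add) hmod \<Rightarrow> 'l \<Rightarrow> 'x \<Rightarrow> 'x set" where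
  "qX A M l x = {y. xsn A M l (y - x) = 0}"

definition repX :: "('l, 'a::ring) pro_alg \<Rightarrow> ('a, 'x::ab_group_add) hmod \<Rightarrow> 'l \<Rightarrow> 'x set \<Rightarrow> 'x" where
  "repX A M l c = (SOME x. c = qX A M l x)"

definition piL :: "('l, 'a::ring) pro_alg \<Rightarrow> ('a, 'x::ab_group_add) hmod \<Rightarrow> 'l \<Rightarrow> ('x \<Rightarrow> 'x) \<Rightarrow> ('x set \<Rightarrow> 'x set)" where
  "piL A M l T = (\<lambda>c. qX A M l (T (repX A M l c)))"

definition inverse_limit_corr :: "('l, 'a::ring) pro_alg \<Rightarrow> ('a, 'x::ab_group_add) hmod \<Rightarrow> ('a \<Rightarrow> 'x \<Rightarrow> 'x) \<Rightarrow> bool" where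
  "inverse_limit_corr A M phi \<longleftrightarrow> pro_cstar_corr A M phi \<and>
     (\<forall>l\<in>idx A. \<exists>psi :: 'a set \<Rightarrow> 'x set \<Rightarrow> 'x set.
        \<forall>a x. psi (qA A l a) (qX A M l x) = qX A M l (phi a x))"

record ('b, 'y) cstar_corr =
  Bc    :: "'b set"
  bmul  :: "'b \<Rightarrow> 'b \<Rightarrow> 'b"
  bzero :: "'b"
  bnorm :: "'b \<Rightarrow> real"
  Yc    :: "'y set"
  yadd  :: "'y \<Rightarrow> 'y \<Rightarrow> 'y"
  ysub  :: "'y \<Rightarrow> 'y \<Rightarrow> 'y"
  yzero :: "'y"
  ysc   :: "complex \<Rightarrow> 'y \<Rightarrow> 'y"
  yact  :: "'y \<Rightarrow> 'b \<Rightarrow> 'y"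
  yip   :: "'y \<Rightarrow> 'y \<Rightarrow> 'b"
  lact  :: "'b \<Rightarrow> 'y \<Rightarrow> 'y"

definition ynorm :: "('b, 'y) cstar_corr \<Rightarrow> 'y \<Rightarrow> real" where
  "ynorm C y = sqrt (bnorm C (yip C y y))"

definition ysum :: "('b, 'y) cstar_corr \<Rightarrow> nat \<Rightarrow> (nat \<Rightarrow> 'y) \<Rightarrow> 'y" where
  "ysum C n f = foldr (\<lambda>i acc. yadd C (f i) acc) [0..<n] (yzero C)"

definition theta :: "('b, 'y) cstar_corr \<Rightarrow> 'y \<Rightarrow> 'y \<Rightarrow> 'y \<Rightarrow> 'y" where
  "theta C x y = (\<lambda>z. yact C x (yip C y z))"

text \<open>K_B(Y): operator-norm closure of the linear span of the theta_{x,y}.\<close>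
definition compact_ops :: "('b, 'y) cstar_corr \<Rightarrow> ('y \<Rightarrow> 'y) set" where
  "compact_ops C = {T. \<forall>e>0. \<exists>n (c :: nat \<Rightarrow> complex) xs ys.
      (\<forall>i<n. xs i \<in> Yc C \<and> ys i \<in> Yc C) \<and>
      (\<forall>z\<in>Yc C. ynorm C z \<le> 1 \<longrightarrow>
         ynorm C (ysub C (T z) (ysum C n (\<lambda>i. ysc C (c i) (theta C (xs i) (ys i) z)))) \<le> e)}"

definition ker_lact :: "('b, 'y) cstar_corr \<Rightarrow> 'b set" where
  "ker_lact C = {c \<in> Bc C. \<forall>y\<in>Yc C. lact C c y = yzero C}"

definition annihilator :: "('b, 'y) cstar_corr \<Rightarrow> 'b set \<Rightarrow> 'b set" where
  "annihilator C S = {b \<in> Bc C. \<forall>c\<in>S. bmul C b c = bzero C}"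

definition J_Y :: "('b, 'y) cstar_corr \<Rightarrow> 'b set" where
  "J_Y C = {b \<in> Bc C. lact C b \<in> compact_ops C} \<inter> annihilator C (ker_lact C)"

definition quot_corr :: "('l, 'a::ring) pro_alg \<Rightarrow> ('a, 'x::ab_group_add) hmod \<Rightarrow> 'l
    \<Rightarrow> ('a set \<Rightarrow> 'x set \<Rightarrow> 'x set) \<Rightarrow> ('a set, 'x set) cstar_corr" where
  "quot_corr A M l psi =
    \<lparr> Bc = range (qA A l),
      bmul = (\<lambda>c d. qA A l (repA A l c * repA A l d)),
      bzero = qA A l 0,
      bnorm = (\<lambda>c. sn A l (repA A l c)),
      Yc = range (qX A M l),
      yadd = (\<lambda>u v. qX A M l (repX A M l u + repX A M l v)),
      ysub = (\<lambda>u v. qX A M l (repX A M l u - repX A M l v)),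
      yzero = qX A M l 0,
      ysc = (\<lambda>k u. qX A M l (xsc M k (repX A M l u))),
      yact = (\<lambda>u c. qX A M l (act M (repX A M l u) (repA A l c))),
      yip = (\<lambda>u v. qA A l (ip M (repX A M l u) (repX A M l v))),
      lact = psi \<rparr>"

definition J_lam :: "('l, 'a::ring) pro_alg \<Rightarrow> ('a, 'x::ab_group_add) hmod \<Rightarrow> ('a \<Rightarrow> 'x \<Rightarrow> 'x)
    \<Rightarrow> ('a set \<Rightarrow> 'x set \<Rightarrow> 'x set) \<Rightarrow> 'l \<Rightarrow> 'a set" where
  "J_lam A M phi psi l = {a. piL A M l (phi a) \<in> compact_ops (quot_corr A M l psi) \<and>
      (\<forall>b. piL A M l (phi b) \<in> {T. \<forall>u\<in>range (qX A M l). T u = qX A M l 0}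
           \<longrightarrow> qA A l (a * b) = qA A l 0)}"

end

theory Submission
  imports Defs
begin

text \<open>Both conditions defining \<open>J\<^sup>\<lambda>\<^sub>X\<close> only see the restriction of
  \<open>\<pi>\<^sub>\<lambda>(\<phi>(a))\<close> to \<open>X\<^sub>\<lambda>\<close>, where it coincides with \<open>\<phi>\<^sub>\<lambda>(\<pi>\<^sub>\<lambda>(a))\<close>,
  and multiplication of cosets in \<open>A\<^sub>\<lambda>\<close> is well defined because a C*-seminorm is
  submultiplicative. Hence \<open>a \<in> J\<^sup>\<lambda>\<^sub>X\<close> iff \<open>\<pi>\<^sub>\<lambda>(a) \<in> J\<^sub>X\<^sub>\<lambda>\<close>, and
  \<open>\<pi>\<^sub>\<lambda>\<close> maps onto \<open>A\<^sub>\<lambda>\<close>.\<close>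

lemma complex_vs_zero:
  assumes "complex_vs sc"
  shows "sc 0 u = 0"
proof -
  have "sc (0 + 0) u = sc 0 u + sc 0 u"
    using assms unfolding complex_vs_def by blast
  then show ?thesis by simp
qed

lemma complex_vs_minus_one:
  assumes "complex_vs sc"
  shows "sc (-1) u = - u"
proof -
  have "sc (1 + -1) u = sc 1 u + sc (-1) u" and "sc 1 u = u"
    using assms unfolding complex_vs_def by blast+
  then have "u + sc (-1) u = 0"
    using complex_vs_zero[OF assms] by simp
  then show ?thesis
    by (simp add: add_eq_0_iff)
qed

locale star_algebra_seminorm =
  fixes A :: "('l, 'a::ring) pro_alg" and p :: "'a \<Rightarrow> real"
  assumes star_algebra: "star_algebra A" and cstar_seminorm: "cstar_seminorm A p"
begin

lemma triangle: "p (a + b) \<le> p a + p b"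
  using cstar_seminorm unfolding cstar_seminorm_def by blast

lemma submult: "p (a * b) \<le> p a * p b"
  using cstar_seminorm unfolding cstar_seminorm_def by blast

lemma scale: "p (asc A c a) = cmod c * p a"
  using cstar_seminorm unfolding cstar_seminorm_def by blast

lemma complex_vs: "complex_vs (asc A)"
  using star_algebra unfolding star_algebra_def by blast

lemma zero [simp]: "p 0 = 0"
  using scale[of 0 0] complex_vs_zero[OF complex_vs, of 0] by simp

lemma minus: "p (- a) = p a"
  using scale[of "-1" a] by (simp add: complex_vs_minus_one[OF complex_vs])

lemma nonneg: "0 \<le> p a"
  using triangle[of a "- a"] by (simp add: minus)

lemma minus_commute: "p (a - b) = p (b - a)"
  using minus[of "a - b"] by simp

lemma null_diff_trans:
  assumes "p (a - b) = 0" "p (b - c) = 0"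
  shows "p (a - c) = 0"
  using triangle[of "a - b" "b - c"] nonneg[of "a - c"] assms by simp

lemma null_diff_mult:
  assumes "p (a - a') = 0" "p (b - b') = 0"
  shows "p (a * b - a' * b') = 0"
proof -
  have "a * b - a' * b' = a * (b - b') + (a - a') * b'"
    by (simp add: algebra_simps)
  then have "p (a * b - a' * b') \<le> p a * p (b - b') + p (a - a') * p b'"
    using triangle submult add_mono order_trans by metis
  then show ?thesis
    using assms nonneg[of "a * b - a' * b'"] by simp
qed

lemma null_coset_eq_iff: "{c. p (c - a) = 0} = {c. p (c - b) = 0} \<longleftrightarrow> p (a - b) = 0"
  using null_diff_trans minus_commute by (auto simp: set_eq_iff)

end

lemma qA_eq_iff:
  assumes "pro_cstar_algebra A" "l \<in> idx A"
  shows "qA A l a = qA A l b \<longleftrightarrow> sn A l (a - b) = 0"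
proof -
  interpret star_algebra_seminorm A "sn A l"
    using assms unfolding pro_cstar_algebra_def by unfold_locales auto
  show ?thesis
    unfolding qA_def by (rule null_coset_eq_iff)
qed

lemma qA_mult_cong:
  assumes "pro_cstar_algebra A" "l \<in> idx A"
    and "qA A l a = qA A l a'" "qA A l b = qA A l b'"
  shows "qA A l (a * b) = qA A l (a' * b')"
proof -
  interpret star_algebra_seminorm A "sn A l"
    using assms(1,2) unfolding pro_cstar_algebra_def by unfold_locales auto
  show ?thesis
    using assms null_diff_mult by (simp add: qA_eq_iff)
qed

lemma qA_repA [simp]: "qA A l (repA A l (qA A l a)) = qA A l a"
  unfolding repA_def by (rule someI[of "\<lambda>b. qA A l a = qA A l b", symmetric]) (rule refl)

lemma qX_repX [simp]: "qX A M l (repX A M l (qX A M l x)) = qX A M l x"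
  unfolding repX_def by (rule someI[of "\<lambda>y. qX A M l x = qX A M l y", symmetric]) (rule refl)

lemma bmul_quot_corr:
  assumes "pro_cstar_algebra A" "l \<in> idx A"
  shows "bmul (quot_corr A M l psi) (qA A l a) (qA A l b) = qA A l (a * b)"
  unfolding quot_corr_def using qA_mult_cong[OF assms qA_repA qA_repA] by simp

lemma compact_ops_cong:
  fixes C :: "('b, 'y) cstar_corr" and T T' :: "'y \<Rightarrow> 'y"
  assumes "\<forall>z\<in>Yc C. T z = T' z"
  shows "T \<in> compact_ops C \<longleftrightarrow> T' \<in> compact_ops C"
  using assms unfolding compact_ops_def by (simp cong: ball_cong)

lemma piL_eq_induced_action:
  assumes "\<And>a x. psi (qA A l a) (qX A M l x) = qX A M l (phi a x)"
  shows "\<forall>z\<in>range (qX A M l). piL A M l (phi a) z = psi (qA A l a) z"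
  unfolding piL_def by (metis assms qX_repX rangeE)

lemma J_lam_iff_J_Y:
  assumes "pro_cstar_algebra A" "l \<in> idx A"
    and "\<And>a x. psi (qA A l a) (qX A M l x) = qX A M l (phi a x)"
  shows "a \<in> J_lam A M phi psi l \<longleftrightarrow> qA A l a \<in> J_Y (quot_corr A M l psi)"
proof -
  let ?C = "quot_corr A M l psi"
  have Yc: "Yc ?C = range (qX A M l)" and Bc: "Bc ?C = range (qA A l)"
    and lact: "lact ?C = psi"
    by (simp_all add: quot_corr_def)
  have agree: "\<forall>z\<in>Yc ?C. piL A M l (phi b) z = psi (qA A l b) z" for b
    using piL_eq_induced_action[where psi=psi, OF assms(3)] Yc by simp
  have compact: "piL A M l (phi a) \<in> compact_ops ?C \<longleftrightarrow> lact ?C (qA A l a) \<in> compact_ops ?C"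
    using compact_ops_cong[OF agree] lact by simp
  have kernel: "(\<forall>u\<in>range (qX A M l). piL A M l (phi b) u = qX A M l 0)
      \<longleftrightarrow> qA A l b \<in> ker_lact ?C" for b
    using agree[of b] by (simp add: ker_lact_def Yc Bc lact, simp add: quot_corr_def)
  have annihilates: "(\<forall>b. qA A l b \<in> ker_lact ?C \<longrightarrow> qA A l (a * b) = qA A l 0)
      \<longleftrightarrow> qA A l a \<in> annihilator ?C (ker_lact ?C)"
  proof -
    have "ker_lact ?C \<subseteq> range (qA A l)"
      by (auto simp: ker_lact_def Bc)
    then have "(\<forall>b. qA A l b \<in> ker_lact ?C \<longrightarrow> bmul ?C (qA A l a) (qA A l b) = bzero ?C)
        \<longleftrightarrow> (\<forall>c\<in>ker_lact ?C. bmul ?C (qA A l a) c = bzero ?C)"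
      by blast
    then show ?thesis
      by (simp add: annihilator_def Bc bmul_quot_corr[OF assms(1,2)], simp add: quot_corr_def)
  qed
  show ?thesis
    unfolding J_lam_def J_Y_def using compact kernel annihilates Bc by auto
qed

theorem lemma4p6:
  fixes A :: "('l, 'a::ring) pro_alg"
    and M :: "('a, 'x::ab_group_add) hmod"
    and phi :: "'a \<Rightarrow> 'x \<Rightarrow> 'x"
    and psi :: "'l \<Rightarrow> 'a set \<Rightarrow> 'x set \<Rightarrow> 'x set"
  assumes "inverse_limit_corr A M phi"
    and "\<And>l a x. l \<in> idx A \<Longrightarrow> psi l (qA A l a) (qX A M l x) = qX A M l (phi a x)"
  shows "\<forall>l\<in>idx A. qA A l ` J_lam A M phi (psi l) l = J_Y (quot_corr A M l (psi l))"
proof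
  fix l assume l: "l \<in> idx A"
  have "pro_cstar_algebra A"
    using assms(1) unfolding inverse_limit_corr_def pro_cstar_corr_def hilbert_module_def by blast
  then have "J_lam A M phi (psi l) l = qA A l -` J_Y (quot_corr A M l (psi l))"
    using J_lam_iff_J_Y[where psi="psi l", OF _ l assms(2)[OF l]] by blast
  moreover have "J_Y (quot_corr A M l (psi l)) \<subseteq> range (qA A l)"
    by (auto simp: J_Y_def quot_corr_def)
  ultimately show "qA A l ` J_lam A M phi (psi l) l = J_Y (quot_corr A M l (psi l))"
    by (simp add: image_vimage_eq inf_absorb1)
qed

end
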